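(* Let $K$ be a field, $X$ a finite connected poset with $n$ elements, and $m$ a positive integer. Then $$J_m=\mathrm{span}_K\{e_{xy}: l(\lfloor x,y\rfloor)\ge m\}=J(I(X,K))^m.$$ In particular $J_n=J(I(X,K))^n=\{0\}$, and $J_m$ is an (associative) ideal, hence a Lie ideal, of $I(X,K)$.
   Context: $I(X,K)$ is the incidence algebra: functions $f:X\times X\to K$ with $f(x,y)=0$ unless $x\le y$, product $(fg)(x,y)=\sum_{x\le t\le y}f(x,t)g(t,y)$; for $x\le y$, $e_{xy}$ is the function equal to $1$ at $(x,y)$ and $0$ elsewhere. $J(I(X,K))=\{f: f(x,x)=0\ \forall x\}$ is its Jacobson radical. $[f,g]=fg-gf$. $J_1=\mathrm{span}_K\{[f,g]:f,g\in I(X,K)\}$ and $J_m=\mathrm{span}_K\{[f,g]: f\in J_1,\ g\in J_{m-1}\}$ for $m\ge2$. $\lfloor x,y\rfloor=\{z:x\le z\le y\}$ and $l(\lfloor x,y\rfloor)$ is the maximum length of a chain in it (length of a chain = cardinality minus one). Connected means any two elements are joined by a sequence in which consecutive elements are in a covering relation. *)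

theory Defs
  imports Main "HOL-Library.Function_Algebras"
begin

text \<open>Incidence algebra I(X,K) of a finite poset X (the type 'a) over a field K (the type 'k).
  Elements are functions f :: 'a => 'a => 'k vanishing off the order relation.\<close>

definition inc_alg :: "('a::order \<Rightarrow> 'a \<Rightarrow> 'k::field) set" where
  "inc_alg = {f. \<forall>x y. \<not> x \<le> y \<longrightarrow> f x y = 0}"

definition inc_mult :: "('a::order \<Rightarrow> 'a \<Rightarrow> 'k::field) \<Rightarrow> ('a \<Rightarrow> 'a \<Rightarrow> 'k) \<Rightarrow> 'a \<Rightarrow> 'a \<Rightarrow> 'k" where
  "inc_mult f g = (\<lambda>x y. \<Sum>t\<in>{t. x \<le> t \<and> t \<le> y}. f x t * g t y)"

definition inc_comm :: "('a::order \<Rightarrow> 'a \<Rightarrow> 'k::field) \<Rightarrow> ('a \<Rightarrow> 'a \<Rightarrow> 'k) \<Rightarrow> 'a \<Rightarrow> 'a \<Rightarrow> 'k" where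
  "inc_comm f g = inc_mult f g - inc_mult g f"

definition eunit :: "'a \<Rightarrow> 'a \<Rightarrow> 'a \<Rightarrow> 'a \<Rightarrow> 'k::field" where
  "eunit x y = (\<lambda>u v. if u = x \<and> v = y then 1 else 0)"

definition kspan :: "('a \<Rightarrow> 'a \<Rightarrow> 'k::field) set \<Rightarrow> ('a \<Rightarrow> 'a \<Rightarrow> 'k) set" where
  "kspan S = {f. \<exists>A c. finite A \<and> A \<subseteq> S \<and> f = (\<lambda>u v. \<Sum>s\<in>A. c s * s u v)}"

definition inc_rad :: "('a::order \<Rightarrow> 'a \<Rightarrow> 'k::field) set" where
  "inc_rad = {f \<in> inc_alg. \<forall>x. f x x = 0}"

text \<open>J_m (only meaningful for m \<ge> 1; J_0 is set to I(X,K) as a dummy).\<close>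
fun Jlie :: "nat \<Rightarrow> ('a::order \<Rightarrow> 'a \<Rightarrow> 'k::field) set" where
  "Jlie 0 = inc_alg"
| "Jlie (Suc 0) = kspan {inc_comm f g | f g. f \<in> inc_alg \<and> g \<in> inc_alg}"
| "Jlie (Suc (Suc m)) = kspan {inc_comm f g | f g. f \<in> Jlie (Suc 0) \<and> g \<in> Jlie (Suc m)}"

fun rad_prods :: "nat \<Rightarrow> ('a::order \<Rightarrow> 'a \<Rightarrow> 'k::field) set" where
  "rad_prods 0 = inc_alg"
| "rad_prods (Suc 0) = inc_rad"
| "rad_prods (Suc (Suc m)) = {inc_mult f g | f g. f \<in> inc_rad \<and> g \<in> rad_prods (Suc m)}"

definition rad_pow :: "nat \<Rightarrow> ('a::order \<Rightarrow> 'a \<Rightarrow> 'k::field) set" where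
  "rad_pow m = kspan (rad_prods m)"

definition interval_length :: "'a::{order,finite} \<Rightarrow> 'a \<Rightarrow> nat" where
  "interval_length x y = Max {card C - 1 | C. C \<subseteq> {z. x \<le> z \<and> z \<le> y} \<and> Complete_Partial_Order.chain (\<le>) C}"

definition covers :: "'a::order \<Rightarrow> 'a \<Rightarrow> bool" where
  "covers x y \<longleftrightarrow> x < y \<and> \<not> (\<exists>z. x < z \<and> z < y)"

definition poset_connected :: "'a::order itself \<Rightarrow> bool" where
  "poset_connected _ \<longleftrightarrow> (\<forall>x y::'a. (\<lambda>a b. covers a b \<or> covers b a)\<^sup>*\<^sup>* x y)"

end

theory Submission
  imports Defs
begin

text \<open>Let \<open>F\<^sub>m\<close> consist of the functions supported on the pairs \<open>x \<le> y\<close> with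
  \<open>l(\<lfloor>x,y\<rfloor>) \<ge> m\<close>; as \<open>X\<close> is finite, \<open>F\<^sub>m\<close> is the span of these \<open>e\<^sub>x\<^sub>y\<close>.
  \<open>F\<^sub>1\<close> is the radical and contains every commutator. Multiplying an element of \<open>F\<^sub>m\<close> on
  either side by one of \<open>F\<^sub>1\<close> lands in \<open>F\<^sub>m\<^sub>+\<^sub>1\<close>, because a chain in \<open>\<lfloor>t,y\<rfloor>\<close>
  extends by \<open>x < t\<close> to a longer chain in \<open>\<lfloor>x,y\<rfloor>\<close>. Conversely, if
  \<open>l(\<lfloor>x,y\<rfloor>) \<ge> m + 1\<close> and \<open>t\<close> follows \<open>x\<close> on a longest chain, then
  \<open>l(\<lfloor>t,y\<rfloor>) \<ge> m\<close> and \<open>e\<^sub>x\<^sub>y = e\<^sub>x\<^sub>t e\<^sub>t\<^sub>y = [e\<^sub>x\<^sub>t, e\<^sub>t\<^sub>y]\<close>. Induction on \<open>m\<close> gives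
  \<open>J\<^sub>m = F\<^sub>m = J(I(X,K))\<^sup>m\<close>, and \<open>F\<^sub>n = 0\<close> since a chain has at most \<open>n\<close> elements.\<close>

lemma finite_interval_chain_cards:
  "finite {card C - 1 | C. C \<subseteq> {z::'a::{order,finite}. x \<le> z \<and> z \<le> y}
    \<and> Complete_Partial_Order.chain (\<le>) C}"
  by (rule finite_image_set) simp

lemma interval_length_ge_card_chain:
  fixes x y :: "'a::{order,finite}"
  assumes "C \<subseteq> {z. x \<le> z \<and> z \<le> y}" "Complete_Partial_Order.chain (\<le>) C"
  shows "card C - 1 \<le> interval_length x y"
  unfolding interval_length_def by (rule Max_ge[OF finite_interval_chain_cards]) (use assms in auto)

lemma interval_length_attained:
  fixes x y :: "'a::{order,finite}"
  obtains C where "C \<subseteq> {z. x \<le> z \<and> z \<le> y}" "Complete_Partial_Order.chain (\<le>) C"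
    "card C - 1 = interval_length x y"
proof -
  have "interval_length x y
      \<in> {card C - 1 | C. C \<subseteq> {z. x \<le> z \<and> z \<le> y} \<and> Complete_Partial_Order.chain (\<le>) C}"
    unfolding interval_length_def
    by (rule Max_in[OF finite_interval_chain_cards]) (use chain_empty in auto)
  then show ?thesis
    using that by auto
qed

lemma interval_length_refl: "interval_length (x::'a::{order,finite}) x = 0"
proof -
  obtain C where C: "C \<subseteq> {z. x \<le> z \<and> z \<le> x}" "card C - 1 = interval_length x x"
    by (rule interval_length_attained)
  have "C \<subseteq> {x}"
    using C(1) by auto
  then have "card C \<le> 1"
    using card_mono[of "{x}" C] by simp
  then show ?thesis
    using C(2) by simp
qed

lemma one_le_interval_length_iff:
  fixes x y :: "'a::{order,finite}"
  assumes "x \<le> y"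
  shows "1 \<le> interval_length x y \<longleftrightarrow> x < y"
proof
  assume "1 \<le> interval_length x y"
  then show "x < y"
    using assms interval_length_refl[of x] by (cases "x = y") auto
next
  assume "x < y"
  then have "card {x, y} - 1 \<le> interval_length x y"
    by (intro interval_length_ge_card_chain) (auto intro: chainI)
  then show "1 \<le> interval_length x y"
    using \<open>x < y\<close> by simp
qed

lemma chain_insert:
  fixes x :: "'a::order"
  shows "Complete_Partial_Order.chain (\<le>) C \<Longrightarrow> (\<And>c. c \<in> C \<Longrightarrow> x \<le> c \<or> c \<le> x)
    \<Longrightarrow> Complete_Partial_Order.chain (\<le>) (insert x C)"
  by (auto simp: chain_def)

lemma card_insert_insert_ge:
  assumes "finite C" "x \<notin> insert t C"
  shows "Suc (card C - 1) \<le> card (insert x (insert t C)) - 1"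
proof -
  have "card C \<le> card (insert t C)" "0 < card (insert t C)"
    using assms(1) by (auto intro: card_mono simp: card_gt_0_iff)
  then show ?thesis
    using assms by simp
qed

lemma Suc_interval_length_le_left:
  fixes x t y :: "'a::{order,finite}"
  assumes "x < t" "t \<le> y"
  shows "Suc (interval_length t y) \<le> interval_length x y"
proof -
  obtain C where C: "C \<subseteq> {z. t \<le> z \<and> z \<le> y}" "Complete_Partial_Order.chain (\<le>) C"
    "card C - 1 = interval_length t y"
    by (rule interval_length_attained)
  have "card (insert x (insert t C)) - 1 \<le> interval_length x y"
    using C(1) assms order_trans[OF less_imp_le[OF assms(1)]]
    by (intro interval_length_ge_card_chain chain_insert C(2)) auto
  moreover have "x \<notin> insert t C"
    using C(1) assms by auto
  ultimately show ?thesis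
    using C(3) card_insert_insert_ge[of C x t] by simp
qed

lemma Suc_interval_length_le_right:
  fixes x t y :: "'a::{order,finite}"
  assumes "x \<le> t" "t < y"
  shows "Suc (interval_length x t) \<le> interval_length x y"
proof -
  obtain C where C: "C \<subseteq> {z. x \<le> z \<and> z \<le> t}" "Complete_Partial_Order.chain (\<le>) C"
    "card C - 1 = interval_length x t"
    by (rule interval_length_attained)
  have "card (insert y (insert t C)) - 1 \<le> interval_length x y"
    using C(1) assms order_trans[OF _ less_imp_le[OF assms(2)]]
    by (intro interval_length_ge_card_chain chain_insert C(2)) auto
  moreover have "y \<notin> insert t C"
    using C(1) assms by auto
  ultimately show ?thesis
    using C(3) card_insert_insert_ge[of C y t] by simp
qed

lemma interval_length_mono_left:
  fixes x t y :: "'a::{order,finite}"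
  assumes "x \<le> t" "t \<le> y"
  shows "interval_length t y \<le> interval_length x y"
  using Suc_interval_length_le_left[of x t y] assms by (cases "x = t") (auto simp: less_le)

lemma interval_length_mono_right:
  fixes x t y :: "'a::{order,finite}"
  assumes "x \<le> t" "t \<le> y"
  shows "interval_length x t \<le> interval_length x y"
  using Suc_interval_length_le_right[of x t y] assms by (cases "t = y") (auto simp: less_le)

lemma interval_length_less_card: "interval_length (x::'a::{order,finite}) y < card (UNIV :: 'a set)"
proof -
  obtain C :: "'a set" where "card C - 1 = interval_length x y"
    by (rule interval_length_attained)
  moreover have "card C \<le> card (UNIV :: 'a set)"
    by (rule card_mono) auto
  moreover have "0 < card (UNIV :: 'a set)"
    by (rule finite_UNIV_card_ge_0) simp
  ultimately show ?thesis
    by linarith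
qed

text \<open>The witness \<open>t\<close> is the least element of a longest chain in the interval, with \<open>x\<close> removed.\<close>

lemma interval_length_Suc_split:
  fixes x y :: "'a::{order,finite}"
  assumes "Suc m \<le> interval_length x y"
  obtains t where "x < t" "t \<le> y" "m \<le> interval_length t y"
proof -
  obtain C where C: "C \<subseteq> {z. x \<le> z \<and> z \<le> y}" "Complete_Partial_Order.chain (\<le>) C"
    "card C - 1 = interval_length x y"
    by (rule interval_length_attained)
  define D where "D = C - {x}"
  have "card C - 1 \<le> card D"
    unfolding D_def using diff_card_le_card_Diff[of "{x}" C] by simp
  then have card_D: "m \<le> card D - 1" "0 < card D"
    using C(3) assms by linarith+
  then obtain t where t: "t \<in> D" "\<forall>b\<in>D. b \<le> t \<longrightarrow> t = b"
    using finite_has_minimal[of D] by (auto simp: card_gt_0_iff)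
  have D_chain: "Complete_Partial_Order.chain (\<le>) D"
    using C(2) chain_subset unfolding D_def by blast
  have t_least: "t \<le> b" if "b \<in> D" for b
    using chainD[OF D_chain t(1) that] t(2) that by auto
  have "x < t" "t \<le> y"
    using t(1) C(1) by (auto simp: D_def less_le)
  moreover have "card D - 1 \<le> interval_length t y"
    using t_least C(1) by (intro interval_length_ge_card_chain D_chain) (auto simp: D_def)
  ultimately show ?thesis
    using that card_D(1) by simp
qed

lemma kspan_mono: "S \<subseteq> T \<Longrightarrow> kspan S \<subseteq> kspan T"
  unfolding kspan_def by blast

definition ksubspace :: "('a \<Rightarrow> 'a \<Rightarrow> 'k::field) set \<Rightarrow> bool" where
  "ksubspace T \<longleftrightarrow> 0 \<in> T \<and> (\<forall>f\<in>T. \<forall>g\<in>T. f + g \<in> T) \<and> (\<forall>c f. f \<in> T \<longrightarrow> (\<lambda>u v. c * f u v) \<in> T)"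

lemma kspan_minimal:
  fixes T :: "('a \<Rightarrow> 'a \<Rightarrow> 'k::field) set"
  assumes "S \<subseteq> T" "ksubspace T"
  shows "kspan S \<subseteq> T"
proof
  fix f assume "f \<in> kspan S"
  then obtain A c where A: "finite A" "A \<subseteq> S" and f: "f = (\<lambda>u v. \<Sum>s\<in>A. c s * s u v)"
    unfolding kspan_def by blast
  have "(\<lambda>u v. \<Sum>s\<in>A. c s * s u v) \<in> T"
    using A
  proof (induction A rule: finite_induct)
    case empty
    then show ?case
      using assms(2) by (simp add: ksubspace_def zero_fun_def)
  next
    case (insert s A)
    have "(\<lambda>u v. \<Sum>s'\<in>insert s A. c s' * s' u v)
        = (\<lambda>u v. c s * s u v) + (\<lambda>u v. \<Sum>s'\<in>A. c s' * s' u v)"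
      using insert.hyps by (simp add: fun_eq_iff)
    moreover have "(\<lambda>u v. c s * s u v) \<in> T"
      using insert.prems assms by (simp add: ksubspace_def subset_iff)
    ultimately show ?case
      using insert assms(2) by (simp add: ksubspace_def)
  qed
  then show "f \<in> T"
    using f by simp
qed

lemma ksubspace_supported: "ksubspace {f :: 'a \<Rightarrow> 'a \<Rightarrow> 'k::field. \<forall>x y. f x y \<noteq> 0 \<longrightarrow> P x y}"
  unfolding ksubspace_def by (auto simp: zero_fun_def) (metis add.right_neutral)

lemma eunit_eqD: "eunit a b = (eunit c d :: 'a \<Rightarrow> 'a \<Rightarrow> 'k::field) \<Longrightarrow> a = c \<and> b = d"
  unfolding eunit_def by (metis one_neq_zero)

lemma eunit_apply: "eunit x y u v = (if u = x \<and> v = y then 1 else 0)"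
  by (simp add: eunit_def)

lemma inc_mult_eunit:
  "inc_mult (eunit a b) (eunit c d)
    = (if b = c \<and> a \<le> b \<and> b \<le> d then eunit a d else (0 :: 'a::{order,finite} \<Rightarrow> 'a \<Rightarrow> 'k::field))"
proof (intro ext)
  fix u v :: 'a
  have "inc_mult (eunit a b) (eunit c d) u v
      = (\<Sum>t\<in>{t. u \<le> t \<and> t \<le> v}.
          if t = b then (if u = a \<and> b = c \<and> v = d then 1 else 0) else (0::'k))"
    unfolding inc_mult_def eunit_def by (rule sum.cong) auto
  also have "\<dots> = (if b = c \<and> a \<le> b \<and> b \<le> d then eunit a d else (0::'a \<Rightarrow> 'a \<Rightarrow> 'k)) u v"
    by (auto simp: eunit_def)
  finally show "inc_mult (eunit a b) (eunit c d) u v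
      = (if b = c \<and> a \<le> b \<and> b \<le> d then eunit a d else (0::'a \<Rightarrow> 'a \<Rightarrow> 'k)) u v" .
qed

lemma inc_comm_eunit:
  "x \<le> t \<Longrightarrow> t \<le> y \<Longrightarrow> x \<noteq> y
    \<Longrightarrow> inc_comm (eunit x t) (eunit t y) = (eunit x y :: 'a::{order,finite} \<Rightarrow> 'a \<Rightarrow> 'k::field)"
  unfolding inc_comm_def inc_mult_eunit by auto

lemma eunit_mem_inc_alg: "x \<le> y \<Longrightarrow> eunit x y \<in> inc_alg"
  by (simp add: inc_alg_def eunit_apply)

lemma kspan_eunit_eq_supported:
  "kspan {eunit x y | x y. P x y} = {f :: 'a::finite \<Rightarrow> 'a \<Rightarrow> 'k::field. \<forall>x y. f x y \<noteq> 0 \<longrightarrow> P x y}"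
  (is "kspan ?E = ?F")
proof
  show "kspan ?E \<subseteq> ?F"
    by (rule kspan_minimal[OF _ ksubspace_supported]) (auto simp: eunit_def split: if_splits)
next
  show "?F \<subseteq> kspan ?E"
  proof
    fix f assume f: "f \<in> ?F"
    define D where "D = {(x, y). P x y}"
    define e where "e = (\<lambda>(x, y). eunit x y :: 'a \<Rightarrow> 'a \<Rightarrow> 'k)"
    define c where "c = (\<lambda>s. case inv_into D e s of (x, y) \<Rightarrow> f x y)"
    have inj: "inj_on e D"
      by (auto simp: inj_on_def e_def dest: eunit_eqD)
    have c_eunit: "c (eunit x y) = f x y" if "(x, y) \<in> D" for x y
      using inv_into_f_f[OF inj that] by (simp add: c_def e_def)
    have "f u v = (\<Sum>s\<in>e ` D. c s * s u v)" for u v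
    proof -
      have "(\<Sum>s\<in>e ` D. c s * s u v) = (\<Sum>p\<in>D. c (e p) * e p u v)"
        by (simp add: sum.reindex[OF inj])
      also have "\<dots> = (\<Sum>p\<in>D. if p = (u, v) then f u v else 0)"
        by (rule sum.cong) (auto simp: c_eunit e_def eunit_apply split: if_splits)
      also have "\<dots> = f u v"
        using f by (auto simp: D_def)
      finally show ?thesis ..
    qed
    moreover have "e ` D \<subseteq> ?E"
      by (auto simp: e_def D_def)
    ultimately show "f \<in> kspan ?E"
      unfolding kspan_def by (intro CollectI exI[of _ "e ` D"] exI[of _ c]) auto
  qed
qed

definition inc_filtration :: "nat \<Rightarrow> ('a::{order,finite} \<Rightarrow> 'a \<Rightarrow> 'k::field) set" where
  "inc_filtration m = {f. \<forall>x y. f x y \<noteq> 0 \<longrightarrow> x \<le> y \<and> m \<le> interval_length x y}"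

lemma inc_filtration_eq_kspan:
  "inc_filtration m = kspan {eunit x y | x y. x \<le> y \<and> m \<le> interval_length x y}"
  unfolding inc_filtration_def by (rule kspan_eunit_eq_supported[symmetric])

lemma ksubspace_inc_filtration: "ksubspace (inc_filtration m)"
  unfolding inc_filtration_def by (rule ksubspace_supported)

lemma inc_filtration_diff: "f \<in> inc_filtration m \<Longrightarrow> g \<in> inc_filtration m \<Longrightarrow> f - g \<in> inc_filtration m"
  by (auto simp: inc_filtration_def) (metis diff_self diff_zero)+

lemma inc_filtration_0: "inc_filtration 0 = inc_alg"
  by (auto simp: inc_filtration_def inc_alg_def)

lemma inc_filtration_subset_inc_alg: "inc_filtration m \<subseteq> inc_alg"
  by (auto simp: inc_filtration_def inc_alg_def)

lemma inc_filtration_1: "inc_filtration 1 = inc_rad"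
proof -
  have "x \<le> y \<and> 1 \<le> interval_length x y \<longleftrightarrow> x \<le> y \<and> x \<noteq> y" for x y :: 'a
    using one_le_interval_length_iff[of x y] by (auto simp: less_le)
  then show ?thesis
    unfolding inc_filtration_def inc_rad_def inc_alg_def by auto
qed

lemma eunit_mem_inc_filtration:
  "x \<le> y \<Longrightarrow> m \<le> interval_length x y \<Longrightarrow> eunit x y \<in> inc_filtration m"
  by (simp add: inc_filtration_def eunit_apply)

lemma inc_filtration_card:
  "inc_filtration (card (UNIV :: 'a set)) = {0 :: 'a::{order,finite} \<Rightarrow> 'a \<Rightarrow> 'k::field}"
proof -
  have "f = 0" if "f \<in> inc_filtration (card (UNIV :: 'a set))" for f :: "'a \<Rightarrow> 'a \<Rightarrow> 'k"
  proof (intro ext)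
    fix x y :: 'a
    have "\<not> card (UNIV :: 'a set) \<le> interval_length x y"
      using interval_length_less_card[of x y] by simp
    then show "f x y = 0 x y"
      using that by (auto simp: inc_filtration_def)
  qed
  then show ?thesis
    using ksubspace_inc_filtration by (auto simp: ksubspace_def)
qed

lemma inc_mult_mem_inc_filtration:
  fixes f g :: "'a::{order,finite} \<Rightarrow> 'a \<Rightarrow> 'k::field"
  assumes "f \<in> inc_filtration a" "g \<in> inc_filtration b"
    and "\<And>x t y :: 'a. x \<le> t \<Longrightarrow> t \<le> y \<Longrightarrow> a \<le> interval_length x t \<Longrightarrow> b \<le> interval_length t y
      \<Longrightarrow> c \<le> interval_length x y"
  shows "inc_mult f g \<in> inc_filtration c"
  unfolding inc_filtration_def
proof (intro CollectI allI impI)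
  fix x y assume "inc_mult f g x y \<noteq> 0"
  then obtain t where "t \<in> {t. x \<le> t \<and> t \<le> y}" "f x t * g t y \<noteq> 0"
    unfolding inc_mult_def by (rule sum.not_neutral_contains_not_neutral)
  then have t: "x \<le> t" "t \<le> y" "f x t \<noteq> 0" "g t y \<noteq> 0"
    by simp_all
  then have "a \<le> interval_length x t" "b \<le> interval_length t y"
    using assms(1,2) by (auto simp: inc_filtration_def)
  then show "x \<le> y \<and> c \<le> interval_length x y"
    using assms(3)[OF t(1,2)] order_trans[OF t(1,2)] by simp
qed

lemma inc_mult_inc_filtration_Suc_left:
  "f \<in> inc_filtration 1 \<Longrightarrow> g \<in> inc_filtration m \<Longrightarrow> inc_mult f g \<in> inc_filtration (Suc m)"
  by (erule inc_mult_mem_inc_filtration, assumption)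
    (metis Suc_interval_length_le_left one_le_interval_length_iff Suc_le_mono order_trans)

lemma inc_mult_inc_filtration_Suc_right:
  "f \<in> inc_filtration 1 \<Longrightarrow> g \<in> inc_filtration m \<Longrightarrow> inc_mult g f \<in> inc_filtration (Suc m)"
  by (rule inc_mult_mem_inc_filtration, assumption, assumption)
    (metis Suc_interval_length_le_right one_le_interval_length_iff Suc_le_mono order_trans)

lemma inc_mult_inc_alg_left:
  "f \<in> inc_alg \<Longrightarrow> g \<in> inc_filtration m \<Longrightarrow> inc_mult f g \<in> inc_filtration m"
  unfolding inc_filtration_0[symmetric]
  by (erule inc_mult_mem_inc_filtration, assumption) (meson interval_length_mono_left order_trans)

lemma inc_mult_inc_alg_right:
  "f \<in> inc_alg \<Longrightarrow> g \<in> inc_filtration m \<Longrightarrow> inc_mult g f \<in> inc_filtration m"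
  unfolding inc_filtration_0[symmetric]
  by (rule inc_mult_mem_inc_filtration, assumption, assumption)
    (meson interval_length_mono_right order_trans)

lemma inc_comm_inc_filtration_Suc:
  "f \<in> inc_filtration 1 \<Longrightarrow> g \<in> inc_filtration m \<Longrightarrow> inc_comm f g \<in> inc_filtration (Suc m)"
  unfolding inc_comm_def
  by (intro inc_filtration_diff inc_mult_inc_filtration_Suc_left inc_mult_inc_filtration_Suc_right)

lemma inc_comm_inc_alg:
  "f \<in> inc_alg \<Longrightarrow> g \<in> inc_filtration m \<Longrightarrow> inc_comm f g \<in> inc_filtration m"
  unfolding inc_comm_def by (intro inc_filtration_diff inc_mult_inc_alg_left inc_mult_inc_alg_right)

text \<open>No hypothesis on \<open>f\<close>, \<open>g\<close> is needed: on the diagonal the commutator is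
  \<open>f x x * g x x - g x x * f x x = 0\<close>, and below it the defining sum is empty.\<close>

lemma inc_comm_mem_inc_filtration_1: "inc_comm f g \<in> inc_filtration 1"
  unfolding inc_filtration_def
proof (intro CollectI allI impI)
  fix x y assume "inc_comm f g x y \<noteq> 0"
  then have nz: "(\<Sum>t\<in>{t. x \<le> t \<and> t \<le> y}. f x t * g t y) \<noteq> (\<Sum>t\<in>{t. x \<le> t \<and> t \<le> y}. g x t * f t y)"
    by (simp add: inc_comm_def inc_mult_def)
  have "x \<le> y"
  proof (rule ccontr)
    assume "\<not> x \<le> y"
    then have "{t. x \<le> t \<and> t \<le> y} = {}"
      using order_trans by blast
    then show False
      using nz by (simp only: sum.empty) simp
  qed
  moreover have "x \<noteq> y"
  proof
    assume "x = y"
    then have "{t. x \<le> t \<and> t \<le> y} = {x}"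
      by auto
    then show False
      using nz \<open>x = y\<close> by (simp add: mult.commute)
  qed
  ultimately show "x \<le> y \<and> 1 \<le> interval_length x y"
    using one_le_interval_length_iff[of x y] by (simp add: less_le)
qed

lemma kspan_eq_inc_filtration:
  assumes "{eunit x y | x y. x \<le> y \<and> m \<le> interval_length x y} \<subseteq> S" "S \<subseteq> inc_filtration m"
  shows "kspan S = inc_filtration m"
proof (rule antisym)
  show "kspan S \<subseteq> inc_filtration m"
    by (rule kspan_minimal[OF assms(2) ksubspace_inc_filtration])
  show "inc_filtration m \<subseteq> kspan S"
    unfolding inc_filtration_eq_kspan by (rule kspan_mono[OF assms(1)])
qed

lemma Jlie_1: "(Jlie (Suc 0) :: ('a::{order,finite} \<Rightarrow> 'a \<Rightarrow> 'k::field) set) = inc_filtration 1"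
  unfolding Jlie.simps
proof (rule kspan_eq_inc_filtration)
  show "{eunit x y | x y. x \<le> y \<and> 1 \<le> interval_length x y}
      \<subseteq> {inc_comm f g | f g. f \<in> inc_alg \<and> (g :: 'a \<Rightarrow> 'a \<Rightarrow> 'k) \<in> inc_alg}"
  proof clarify
    fix x y :: 'a assume "x \<le> y" "1 \<le> interval_length x y"
    then have "x < y"
      using one_le_interval_length_iff[of x y] by simp
    then have "eunit x y = inc_comm (eunit x x) (eunit x y :: 'a \<Rightarrow> 'a \<Rightarrow> 'k)"
      by (simp add: inc_comm_eunit)
    then show "\<exists>f g. eunit x y = inc_comm f g \<and> f \<in> inc_alg \<and> (g :: 'a \<Rightarrow> 'a \<Rightarrow> 'k) \<in> inc_alg"
      using eunit_mem_inc_alg \<open>x \<le> y\<close> by blast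
  qed
  show "{inc_comm f g | f g. f \<in> inc_alg \<and> (g :: 'a \<Rightarrow> 'a \<Rightarrow> 'k) \<in> inc_alg} \<subseteq> inc_filtration 1"
    using inc_comm_mem_inc_filtration_1 by blast
qed

lemma Jlie_Suc:
  "(Jlie (Suc m) :: ('a::{order,finite} \<Rightarrow> 'a \<Rightarrow> 'k::field) set) = inc_filtration (Suc m)"
proof (induction m)
  case 0
  then show ?case
    using Jlie_1 by simp
next
  case (Suc m)
  show ?case
    unfolding Jlie.simps(3)
  proof (rule kspan_eq_inc_filtration)
    show "{eunit x y | x y. x \<le> y \<and> Suc (Suc m) \<le> interval_length x y}
        \<subseteq> {inc_comm f g | f g. f \<in> Jlie (Suc 0) \<and> (g :: 'a \<Rightarrow> 'a \<Rightarrow> 'k) \<in> Jlie (Suc m)}"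
    proof clarify
      fix x y :: 'a assume "x \<le> y" and len: "Suc (Suc m) \<le> interval_length x y"
      from len obtain t where t: "x < t" "t \<le> y" "Suc m \<le> interval_length t y"
        by (rule interval_length_Suc_split)
      have "eunit x y = inc_comm (eunit x t) (eunit t y :: 'a \<Rightarrow> 'a \<Rightarrow> 'k)"
        using t by (simp add: inc_comm_eunit less_imp_le)
      moreover have "eunit x t \<in> (Jlie (Suc 0) :: ('a \<Rightarrow> 'a \<Rightarrow> 'k) set)"
        unfolding Jlie_1 using t(1) one_le_interval_length_iff[of x t]
        by (simp add: eunit_mem_inc_filtration less_imp_le)
      moreover have "eunit t y \<in> (Jlie (Suc m) :: ('a \<Rightarrow> 'a \<Rightarrow> 'k) set)"
        unfolding Suc.IH using t(2,3) by (rule eunit_mem_inc_filtration)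
      ultimately show "\<exists>f g. eunit x y = inc_comm f g \<and> f \<in> Jlie (Suc 0)
          \<and> (g :: 'a \<Rightarrow> 'a \<Rightarrow> 'k) \<in> Jlie (Suc m)"
        by blast
    qed
    show "{inc_comm f g | f g. f \<in> Jlie (Suc 0) \<and> (g :: 'a \<Rightarrow> 'a \<Rightarrow> 'k) \<in> Jlie (Suc m)}
        \<subseteq> inc_filtration (Suc (Suc m))"
      unfolding Jlie_1 Suc.IH using inc_comm_inc_filtration_Suc by blast
  qed
qed

lemma rad_prods_subset_inc_filtration:
  "(rad_prods (Suc m) :: ('a::{order,finite} \<Rightarrow> 'a \<Rightarrow> 'k::field) set) \<subseteq> inc_filtration (Suc m)"
proof (induction m)
  case 0
  then show ?case
    by (simp add: inc_filtration_1[unfolded One_nat_def])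
next
  case (Suc m)
  then show ?case
    using inc_mult_inc_filtration_Suc_left by (auto simp: inc_filtration_1[symmetric])
qed

lemma eunit_mem_rad_prods:
  "x \<le> y \<Longrightarrow> Suc m \<le> interval_length x y
    \<Longrightarrow> (eunit x y :: 'a::{order,finite} \<Rightarrow> 'a \<Rightarrow> 'k::field) \<in> rad_prods (Suc m)"
proof (induction m arbitrary: x)
  case 0
  then show ?case
    using eunit_mem_inc_filtration[of x y 1] by (simp add: inc_filtration_1[unfolded One_nat_def])
next
  case (Suc m)
  then obtain t where t: "x < t" "t \<le> y" "Suc m \<le> interval_length t y"
    by (blast elim: interval_length_Suc_split)
  have "eunit x y = inc_mult (eunit x t) (eunit t y :: 'a \<Rightarrow> 'a \<Rightarrow> 'k)"
    using t by (simp add: inc_mult_eunit less_imp_le)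
  moreover have "eunit x t \<in> (inc_rad :: ('a \<Rightarrow> 'a \<Rightarrow> 'k) set)"
    unfolding inc_filtration_1[symmetric] using t(1) one_le_interval_length_iff[of x t]
    by (simp add: eunit_mem_inc_filtration less_imp_le)
  moreover have "eunit t y \<in> (rad_prods (Suc m) :: ('a \<Rightarrow> 'a \<Rightarrow> 'k) set)"
    using Suc.IH t(2,3) .
  ultimately show ?case
    by auto
qed

lemma rad_pow_Suc:
  "(rad_pow (Suc m) :: ('a::{order,finite} \<Rightarrow> 'a \<Rightarrow> 'k::field) set) = inc_filtration (Suc m)"
  unfolding rad_pow_def
  by (rule kspan_eq_inc_filtration)
    (auto intro: eunit_mem_rad_prods rad_prods_subset_inc_filtration[THEN subsetD])

theorem proposition2p4:
  fixes m n :: nat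
  assumes conn: "poset_connected TYPE('a::{finite,order})"
    and n_def: "n = card (UNIV :: 'a set)"
    and m_pos: "m \<ge> 1"
  shows "(Jlie m :: ('a \<Rightarrow> 'a \<Rightarrow> 'k::field) set)
           = kspan {eunit x y | x y. x \<le> y \<and> interval_length x y \<ge> m}
       \<and> (Jlie m :: ('a \<Rightarrow> 'a \<Rightarrow> 'k) set) = rad_pow m
       \<and> (Jlie n :: ('a \<Rightarrow> 'a \<Rightarrow> 'k) set) = {0}
       \<and> (rad_pow n :: ('a \<Rightarrow> 'a \<Rightarrow> 'k) set) = {0}
       \<and> (Jlie m :: ('a \<Rightarrow> 'a \<Rightarrow> 'k) set) \<subseteq> inc_alg
       \<and> 0 \<in> (Jlie m :: ('a \<Rightarrow> 'a \<Rightarrow> 'k) set)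
       \<and> (\<forall>f\<in>Jlie m. \<forall>g\<in>Jlie m. f + g \<in> (Jlie m :: ('a \<Rightarrow> 'a \<Rightarrow> 'k) set))
       \<and> (\<forall>c::'k. \<forall>f\<in>Jlie m. (\<lambda>u v. c * f u v) \<in> (Jlie m :: ('a \<Rightarrow> 'a \<Rightarrow> 'k) set))
       \<and> (\<forall>f\<in>inc_alg. \<forall>g\<in>Jlie m. inc_mult f g \<in> (Jlie m :: ('a \<Rightarrow> 'a \<Rightarrow> 'k) set)
                                \<and> inc_mult g f \<in> Jlie m)
       \<and> (\<forall>f\<in>inc_alg. \<forall>g\<in>Jlie m. inc_comm f g \<in> (Jlie m :: ('a \<Rightarrow> 'a \<Rightarrow> 'k) set))"
proof -
  obtain k where "m = Suc k"
    using m_pos by (cases m) auto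
  then have J: "Jlie m = inc_filtration m" and R: "rad_pow m = inc_filtration m"
    by (simp_all only: Jlie_Suc rad_pow_Suc)
  have "0 < n"
    unfolding n_def by (simp add: finite_UNIV_card_ge_0)
  then obtain j where j: "n = Suc j"
    using gr0_implies_Suc by blast
  have "(Jlie n :: ('a \<Rightarrow> 'a \<Rightarrow> 'k) set) = {0}" "(rad_pow n :: ('a \<Rightarrow> 'a \<Rightarrow> 'k) set) = {0}"
    using inc_filtration_card n_def unfolding j Jlie_Suc rad_pow_Suc by simp_all
  moreover have "ksubspace (inc_filtration m :: ('a \<Rightarrow> 'a \<Rightarrow> 'k) set)"
    by (rule ksubspace_inc_filtration)
  ultimately show ?thesis
    unfolding J R ksubspace_def
    by (simp add: inc_filtration_eq_kspan[symmetric] inc_filtration_subset_inc_alg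
        inc_mult_inc_alg_left inc_mult_inc_alg_right inc_comm_inc_alg)
qed

end
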